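(* Let $r\ge1$ and let $x_1,\ldots,x_r,y_1,\ldots,y_r$ be positive integers which are the parameters of a balanced lobster, i.e. they satisfy, for all $i=1,\ldots,r$: $x_i=y_{r-\frac{i-1}{2}}$ and $y_i=x_{r-\frac{i-1}{2}}$ when $i$ is odd, and $x_i=x_{i/2}$ and $y_i=y_{i/2}$ when $i$ is even. Let $i$ be an odd integer and $j$ an even integer with $1\le i,j\le r$. Then (i) $\sum_{t=\frac{i+1}{2}}^{i}x_t=\sum_{t=r-\frac{i-1}{2}}^{r}y_t$; (ii) $\sum_{t=\frac{i+1}{2}}^{i}y_t=\sum_{t=r-\frac{i-1}{2}}^{r}x_t$; (iii) $\sum_{t=\frac{j}{2}+1}^{j}x_t=\sum_{t=r-\frac{j}{2}+1}^{r}y_t$; (iv) $\sum_{t=\frac{j}{2}+1}^{j}y_t=\sum_{t=r-\frac{j}{2}+1}^{r}x_t$.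
   Context: The lobster in question consists of adjacent vertices $v_1,v_2$; $v_1$ is adjacent to $s_1\ge0$ leaves and to vertices $u_{11},\ldots,u_{1r}$, where $u_{1i}$ is adjacent to $x_i\ge1$ further leaves; $v_2$ is adjacent to $s_2\ge0$ leaves and to vertices $u_{21},\ldots,u_{2r}$, where $u_{2j}$ is adjacent to $y_j\ge1$ further leaves. It is called balanced when the displayed relations between the $x_i$ and $y_i$ hold. *)

theory Defs
  imports Main
begin

text \<open>Parameters x_1..x_r, y_1..y_r of the lobster, represented as functions on nat
  (only indices 1..r matter). Balancedness condition from the paper.\<close>

definition balanced_lobster :: "nat \<Rightarrow> (nat \<Rightarrow> nat) \<Rightarrow> (nat \<Rightarrow> nat) \<Rightarrow> bool" where
  "balanced_lobster r x y \<longleftrightarrow>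
     (\<forall>i\<in>{1..r}. (odd i \<longrightarrow> x i = y (r - (i - 1) div 2) \<and> y i = x (r - (i - 1) div 2)) \<and>
                  (even i \<longrightarrow> x i = x (i div 2) \<and> y i = y (i div 2)))"

end

theory Submission
  imports Defs
begin

text \<open>Write \<open>L n = \<Sum>t = n div 2 + 1..n. x t\<close> and \<open>R n = \<Sum>t = r - (n - 1) div 2..r. y t\<close>;
  for odd \<open>n\<close> the lower limit of \<open>L n\<close> is \<open>(n + 1) div 2\<close>, for even \<open>n\<close> the one of \<open>R n\<close> is
  \<open>r - n div 2 + 1\<close>, so all four identities are instances of \<open>L n = R n\<close> for \<open>(x, y)\<close> and
  for the again balanced \<open>(y, x)\<close>. We show \<open>L n = R n\<close> by induction on \<open>n\<close>: passing from
  \<open>2m\<close> to \<open>2m + 1\<close> adds \<open>x (2m + 1)\<close> to \<open>L\<close> and \<open>y (r - m)\<close> to \<open>R\<close>, which are equal by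
  the odd balancing condition; passing from \<open>2m + 1\<close> to \<open>2m + 2\<close> replaces \<open>x (m + 1)\<close> by
  \<open>x (2m + 2)\<close> in \<open>L\<close> and leaves \<open>R\<close> unchanged, and these are equal by the even condition.\<close>

lemma balanced_lobster_swap: "balanced_lobster r x y \<Longrightarrow> balanced_lobster r y x"
  by (auto simp: balanced_lobster_def)

lemma balanced_lobster_odd:
  "balanced_lobster r x y \<Longrightarrow> 2 * m + 1 \<le> r \<Longrightarrow> x (2 * m + 1) = y (r - m)"
  by (auto simp: balanced_lobster_def)

lemma balanced_lobster_even:
  "balanced_lobster r x y \<Longrightarrow> 2 * m + 2 \<le> r \<Longrightarrow> x (2 * m + 2) = x (m + 1)"
  unfolding balanced_lobster_def by (drule bspec[of _ _ "2 * m + 2"]) auto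

lemma balanced_lobster_window_sum:
  assumes bal: "balanced_lobster r x y" and "1 \<le> n" "n \<le> r"
  shows "(\<Sum>t = n div 2 + 1..n. x t) = (\<Sum>t = r - (n - 1) div 2..r. y t)"
  using assms(2,3)
proof (induction n rule: nat_induct_at_least)
  case base
  then show ?case using balanced_lobster_odd[OF bal, of 0] by simp
next
  case (Suc n)
  then have IH: "(\<Sum>t = n div 2 + 1..n. x t) = (\<Sum>t = r - (n - 1) div 2..r. y t)"
    by simp
  consider (even) m where "n = 2 * m" "1 \<le> m" | (odd) m where "n = 2 * m + 1"
    using \<open>1 \<le> n\<close> by (metis oddE evenE mult_eq_0_iff less_one not_le zero_neq_numeral)
  then show ?case
  proof cases
    case even
    have "(\<Sum>t = m + 1..2 * m + 1. x t) = (\<Sum>t = m + 1..2 * m. x t) + x (2 * m + 1)"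
      by (simp add: sum.cl_ivl_Suc)
    moreover have "(\<Sum>t = r - m..r. y t) = y (r - m) + (\<Sum>t = r - m + 1..r. y t)"
      using even Suc.prems by (simp add: sum.atLeast_Suc_atMost)
    moreover have "r - (n - 1) div 2 = r - m + 1"
      using even Suc.prems by simp
    ultimately show ?thesis
      using IH even Suc.prems balanced_lobster_odd[OF bal, of m] by simp
  next
    case odd
    have "(\<Sum>t = m + 1..2 * m + 1. x t) = x (m + 1) + (\<Sum>t = m + 2..2 * m + 1. x t)"
      by (simp add: sum.atLeast_Suc_atMost)
    moreover have "(\<Sum>t = m + 2..2 * m + 2. x t) = (\<Sum>t = m + 2..2 * m + 1. x t) + x (2 * m + 2)"
      by (simp add: sum.cl_ivl_Suc)
    moreover have "n div 2 + 1 = m + 1" "Suc n div 2 + 1 = m + 2" "Suc n = 2 * m + 2"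
      "(Suc n - 1) div 2 = (n - 1) div 2"
      using odd by simp_all
    ultimately show ?thesis
      using IH odd Suc.prems balanced_lobster_even[OF bal, of m] by (simp only:)
  qed
qed

theorem lemma4p8:
  fixes r :: nat and x y :: "nat \<Rightarrow> nat" and i j :: nat
  assumes "r \<ge> 1"
    and "\<forall>t\<in>{1..r}. x t \<ge> 1 \<and> y t \<ge> 1"
    and "balanced_lobster r x y"
    and "odd i" and "1 \<le> i" and "i \<le> r"
    and "even j" and "1 \<le> j" and "j \<le> r"
  shows "(\<Sum>t = (i + 1) div 2..i. x t) = (\<Sum>t = r - (i - 1) div 2..r. y t) \<and>
         (\<Sum>t = (i + 1) div 2..i. y t) = (\<Sum>t = r - (i - 1) div 2..r. x t) \<and>
         (\<Sum>t = j div 2 + 1..j. x t) = (\<Sum>t = r - j div 2 + 1..r. y t) \<and>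
         (\<Sum>t = j div 2 + 1..j. y t) = (\<Sum>t = r - j div 2 + 1..r. x t)"
proof -
  note xy = balanced_lobster_window_sum[OF assms(3)]
  note yx = balanced_lobster_window_sum[OF balanced_lobster_swap[OF assms(3)]]
  have "(i + 1) div 2 = i div 2 + 1" using \<open>odd i\<close> by presburger
  moreover have "r - (j - 1) div 2 = r - j div 2 + 1" using \<open>even j\<close> \<open>1 \<le> j\<close> \<open>j \<le> r\<close> by presburger
  ultimately show ?thesis
    using xy[of i] yx[of i] xy[of j] yx[of j] assms(5,6,8,9) by simp
qed

end
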